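(* Let $d\ge0$ be an even integer and $\lambda\in(0,\infty)\setminus\mathbb{N}$ with $d\le -2+2\left\lfloor\frac{\lambda+1}{2}\right\rfloor$. Then $S_{d,\mathbf{w}^\lambda}=S_{d+1,\mathbf{w}^\lambda}$.
   Context: Let $\phi:[0,1]\to(0,1]$ be non-increasing with $\phi(0)=1$ (in particular positive on $[0,1)$), $\omega(x)=\phi(|x|)$ for $|x|\le1$ and $0$ otherwise, and $w^\lambda_m=\omega(m/\lambda)$, $m\in\mathbb{Z}$. For an integer $e\ge0$ let $\Pi_e$ be the real polynomials of degree at most $e$. For $i\in\{0,1\}$ let $M_i=\{m\in\mathbb{Z}: m\equiv i\pmod 2,\ |m|<\lambda\}$. The weighted local polynomial regression scheme $S_{e,\mathbf{w}^\lambda}$ maps a real sequence $\mathbf{f}=(f_j)_{j\in\mathbb{Z}}$ to $(S\mathbf{f})_{2j+i}=\hat p(0)$ ($i\in\{0,1\}$, $j\in\mathbb{Z}$), where $\hat p$ is a minimizer of $\sum_{m\in M_i} w^\lambda_m(f_{j+(m+i)/2}-p(m))^2$ over $p\in\Pi_e$ (when the minimizer is not unique, $\hat p$ is an interpolating polynomial and its value at $0$ is independent of the choice). *)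

theory Defs
  imports Complex_Main "HOL-Computational_Algebra.Polynomial"
begin

definition omega :: "(real \<Rightarrow> real) \<Rightarrow> real \<Rightarrow> real" where
  "omega phi x = (if \<bar>x\<bar> \<le> 1 then phi \<bar>x\<bar> else 0)"

definition wlam :: "(real \<Rightarrow> real) \<Rightarrow> real \<Rightarrow> int \<Rightarrow> real" where
  "wlam phi lam m = omega phi (real_of_int m / lam)"

definition Mset :: "real \<Rightarrow> int \<Rightarrow> int set" where
  "Mset lam i = {m. m mod 2 = i mod 2 \<and> \<bar>real_of_int m\<bar> < lam}"

definition lpr_cost ::
  "(int \<Rightarrow> real) \<Rightarrow> int set \<Rightarrow> (int \<Rightarrow> real) \<Rightarrow> int \<Rightarrow> int \<Rightarrow> real poly \<Rightarrow> real" where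
  "lpr_cost w M f j i p =
     (\<Sum>m\<in>M. w m * (f (j + (m + i) div 2) - poly p (real_of_int m))\<^sup>2)"

definition lpr_scheme ::
  "nat \<Rightarrow> (real \<Rightarrow> real) \<Rightarrow> real \<Rightarrow> (int \<Rightarrow> real) \<Rightarrow> int \<Rightarrow> real" where
  "lpr_scheme e phi lam f k =
     (let i = k mod 2; j = k div 2;
          c = lpr_cost (wlam phi lam) (Mset lam i) f j i;
          p = (SOME p. degree p \<le> e \<and> (\<forall>q. degree q \<le> e \<longrightarrow> c p \<le> c q))
      in poly p 0)"

end

theory Submission
  imports Defs
begin

(*
  Both schemes are weighted least-squares fits on the node set M_i, which is symmetric
  under m -> -m and carries even, positive weights. The residual of a best fit is
  orthogonal to the polynomials it competes with, so the difference h of the fits of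
  degree d+1 and d is orthogonal to Pi_d. As d+1 is odd, the even part g of h lies in
  Pi_d, and symmetry gives <g,g> = (<h,g> + <h(-.),g>)/2 = <h,g> = 0; hence g vanishes
  on M_i. Since g(0) = h(0), it remains that M_i determines the value at 0 of a
  polynomial in Pi_d: for i = 0 because 0 is a node, for i = 1 because the bound on d
  (strict, as lambda is not an integer) keeps the d+2 odd nodes +-1, ..., +-(d+1)
  inside M_1.
*)

(* Unlike a degree bound, this family contains the zero space, which starts the
   induction in orthogonal_projection_exists. *)
definition polys_below :: "nat \<Rightarrow> 'a::zero poly set" where
  "polys_below n = {p. \<forall>k\<ge>n. coeff p k = 0}"

lemma polys_below_0: "polys_below 0 = {0}"
  by (auto simp: polys_below_def poly_eq_iff)

lemma polys_below_Suc_iff: "p \<in> polys_below (Suc e) \<longleftrightarrow> degree p \<le> e"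
  by (auto simp: polys_below_def intro: degree_le coeff_eq_0)

definition even_part :: "'a::field poly \<Rightarrow> 'a poly" where
  "even_part h = smult (1/2) (h + h \<circ>\<^sub>p [:0, -1:])"

lemma poly_even_part: "poly (even_part h) x = (poly h x + poly h (- x)) / 2"
  by (simp add: even_part_def poly_pcompose)

lemma degree_even_part:
  assumes "even d" and "degree h \<le> Suc d"
  shows "degree (even_part h) \<le> d"
proof (rule degree_le, intro allI impI)
  fix i assume "d < i"
  then have "odd i \<or> coeff h i = 0"
    using assms by (cases "i = Suc d") (auto intro: coeff_eq_0)
  then show "coeff (even_part h) i = 0"
    by (auto simp: even_part_def coeff_pcompose_linear)
qed

lemma linear_coeff_zero_if_quadratic_dominates:
  fixes a b :: real
  assumes dom: "\<forall>t. 2 * t * a \<le> t\<^sup>2 * b"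
  shows "a = 0"
proof -
  have "0 \<le> b" using dom[rule_format, of 1] dom[rule_format, of "-1"] by simp
  define t where "t = a / (b + 1)"
  have a_eq: "a = t * (b + 1)" using \<open>0 \<le> b\<close> by (simp add: t_def)
  have "2 * t * (t * (b + 1)) \<le> t\<^sup>2 * b" using dom a_eq by metis
  then have "t\<^sup>2 * (b + 2) \<le> 0" by (simp add: algebra_simps power2_eq_square)
  then have "t = 0" using \<open>0 \<le> b\<close> by (simp add: mult_le_0_iff)
  then show "a = 0" using a_eq by simp
qed

locale weighted_lsq =
  fixes M :: "int set" and w :: "int \<Rightarrow> real"
  assumes finite_nodes: "finite M"
    and weight_nonneg: "m \<in> M \<Longrightarrow> 0 \<le> w m"
begin

definition inner_w :: "(int \<Rightarrow> real) \<Rightarrow> (int \<Rightarrow> real) \<Rightarrow> real" where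
  "inner_w u v = (\<Sum>m\<in>M. w m * u m * v m)"

definition cost :: "(int \<Rightarrow> real) \<Rightarrow> real poly \<Rightarrow> real" where
  "cost y p = (\<Sum>m\<in>M. w m * (y m - poly p (of_int m))\<^sup>2)"

lemma lpr_cost_eq_cost: "lpr_cost w M f j i = cost (\<lambda>m. f (j + (m + i) div 2))"
  by (simp add: fun_eq_iff lpr_cost_def cost_def)

definition best_fit :: "nat \<Rightarrow> (int \<Rightarrow> real) \<Rightarrow> real poly \<Rightarrow> bool" where
  "best_fit e y p \<longleftrightarrow> degree p \<le> e \<and> (\<forall>q. degree q \<le> e \<longrightarrow> cost y p \<le> cost y q)"

abbreviation poly_fun :: "real poly \<Rightarrow> int \<Rightarrow> real" where
  "poly_fun p \<equiv> \<lambda>m. poly p (of_int m)"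

abbreviation residual :: "(int \<Rightarrow> real) \<Rightarrow> real poly \<Rightarrow> int \<Rightarrow> real" where
  "residual y p \<equiv> \<lambda>m. y m - poly p (of_int m)"

lemma inner_w_add_left: "inner_w (\<lambda>m. u m + v m) z = inner_w u z + inner_w v z"
  by (simp add: inner_w_def algebra_simps sum.distrib)

lemma inner_w_diff_left: "inner_w (\<lambda>m. u m - v m) z = inner_w u z - inner_w v z"
  by (simp add: inner_w_def algebra_simps sum_subtractf)

lemma inner_w_scale_left: "inner_w (\<lambda>m. c * u m) z = c * inner_w u z"
  by (simp add: inner_w_def sum_distrib_left mult_ac)

lemma inner_w_add_right: "inner_w z (\<lambda>m. u m + v m) = inner_w z u + inner_w z v"
  by (simp add: inner_w_def algebra_simps sum.distrib)

lemma inner_w_scale_right: "inner_w z (\<lambda>m. c * u m) = c * inner_w z u"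
  by (simp add: inner_w_def sum_distrib_left mult_ac)

lemma inner_w_self_nonneg: "0 \<le> inner_w u u"
  by (simp add: inner_w_def weight_nonneg sum_nonneg mult.assoc)

lemma inner_w_self_eq_0_imp_orthogonal:
  assumes "inner_w u u = 0"
  shows "inner_w v u = 0"
proof -
  have "\<forall>m\<in>M. w m * u m * u m = 0"
    using assms finite_nodes weight_nonneg
    by (subst sum_nonneg_eq_0_iff[symmetric]) (auto simp: inner_w_def mult.assoc)
  then have "\<forall>m\<in>M. w m * u m = 0" by simp
  then show ?thesis by (auto simp: inner_w_def mult_ac intro!: sum.neutral)
qed

lemma cost_add:
  "cost y (p + q) = cost y p - 2 * inner_w (residual y p) (poly_fun q) + inner_w (poly_fun q) (poly_fun q)"
proof -
  have "w m * (y m - poly (p + q) (of_int m))\<^sup>2 = w m * (y m - poly p (of_int m))\<^sup>2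
      - 2 * (w m * (y m - poly p (of_int m)) * poly q (of_int m)) + w m * poly q (of_int m) * poly q (of_int m)" for m
    by (simp add: power2_eq_square algebra_simps)
  then show ?thesis by (simp add: cost_def inner_w_def sum.distrib sum_subtractf sum_distrib_left)
qed

lemma best_fit_iff_orthogonal:
  assumes "degree p \<le> e"
  shows "best_fit e y p \<longleftrightarrow> (\<forall>q. degree q \<le> e \<longrightarrow> inner_w (residual y p) (poly_fun q) = 0)"
proof
  assume fit: "best_fit e y p"
  show "\<forall>q. degree q \<le> e \<longrightarrow> inner_w (residual y p) (poly_fun q) = 0"
  proof (intro allI impI)
    fix q :: "real poly" assume "degree q \<le> e"
    have "2 * t * inner_w (residual y p) (poly_fun q) \<le> t\<^sup>2 * inner_w (poly_fun q) (poly_fun q)" for t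
    proof -
      have "degree (p + smult t q) \<le> e"
        using assms \<open>degree q \<le> e\<close> by (simp add: degree_add_le)
      then have "cost y p \<le> cost y (p + smult t q)" using fit by (simp add: best_fit_def)
      then show ?thesis
        by (simp add: cost_add inner_w_scale_left inner_w_scale_right power2_eq_square mult_ac)
    qed
    then show "inner_w (residual y p) (poly_fun q) = 0"
      by (intro linear_coeff_zero_if_quadratic_dominates) blast
  qed
next
  assume orth: "\<forall>q. degree q \<le> e \<longrightarrow> inner_w (residual y p) (poly_fun q) = 0"
  have "cost y p \<le> cost y q" if "degree q \<le> e" for q
  proof -
    have "degree (q - p) \<le> e" using assms that by (simp add: degree_diff_le)
    then have "cost y (p + (q - p)) = cost y p + inner_w (poly_fun (q - p)) (poly_fun (q - p))"
      using orth by (simp only: cost_add)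
    then show ?thesis using inner_w_self_nonneg by simp
  qed
  then show "best_fit e y p" using assms by (simp add: best_fit_def)
qed

lemma orthogonal_projection_exists:
  "\<exists>p\<in>polys_below n. \<forall>q\<in>polys_below n. inner_w (residual y p) (poly_fun q) = 0"
proof (induction n arbitrary: y)
  case 0
  show ?case by (simp add: polys_below_0 inner_w_def)
next
  case (Suc n)
  obtain p0 where p0: "p0 \<in> polys_below n"
    and p0_orth: "\<forall>v\<in>polys_below n. inner_w (residual y p0) (poly_fun v) = 0"
    using Suc.IH by blast
  obtain q0 where q0: "q0 \<in> polys_below n"
    and q0_orth: "\<forall>v\<in>polys_below n. inner_w (residual (poly_fun (monom 1 n)) q0) (poly_fun v) = 0"
    using Suc.IH[of "poly_fun (monom 1 n)"] by blast
  define e0 where "e0 = residual y p0"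
  define r where "r = monom 1 n - q0"
  have r_orth: "inner_w (poly_fun r) (poly_fun v) = 0" if "v \<in> polys_below n" for v
    using q0_orth that by (simp add: r_def)
  have coeff_r: "coeff r n = 1" and r: "r \<in> polys_below (Suc n)"
    using q0 by (auto simp: r_def polys_below_def)
  define t where "t = inner_w e0 (poly_fun r) / inner_w (poly_fun r) (poly_fun r)"
  \<comment> \<open>If r has norm 0 it is orthogonal to everything, so the junk value t = 0 is right.\<close>
  have t: "inner_w e0 (poly_fun r) = t * inner_w (poly_fun r) (poly_fun r)"
    using inner_w_self_eq_0_imp_orthogonal
    by (cases "inner_w (poly_fun r) (poly_fun r) = 0") (auto simp: t_def)
  have "inner_w (residual y (p0 + smult t r)) (poly_fun q) = 0" if "q \<in> polys_below (Suc n)" for q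
  proof -
    define v where "v = q - smult (coeff q n) r"
    have "coeff v k = 0" if "n \<le> k" for k
      using \<open>q \<in> polys_below (Suc n)\<close> r coeff_r that
      by (cases "k = n") (auto simp: v_def polys_below_def)
    then have v: "v \<in> polys_below n" by (simp add: polys_below_def)
    have "residual y (p0 + smult t r) = (\<lambda>m. e0 m - t * poly_fun r m)"
      by (simp add: e0_def algebra_simps)
    moreover have "poly_fun q = (\<lambda>m. poly_fun v m + coeff q n * poly_fun r m)"
      by (simp add: v_def)
    moreover have "inner_w e0 (poly_fun v) = 0"
      using p0_orth v by (simp add: e0_def)
    ultimately show ?thesis
      using r_orth[OF v] t
      by (simp add: inner_w_diff_left inner_w_add_right inner_w_scale_left inner_w_scale_right)
  qed
  moreover have "p0 + smult t r \<in> polys_below (Suc n)"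
    using p0 r by (simp add: polys_below_def)
  ultimately show ?case by blast
qed

lemma best_fit_exists: "\<exists>p. best_fit e y p"
proof -
  obtain p where "p \<in> polys_below (Suc e)"
    and "\<forall>q\<in>polys_below (Suc e). inner_w (residual y p) (poly_fun q) = 0"
    using orthogonal_projection_exists by blast
  then show ?thesis by (metis best_fit_iff_orthogonal polys_below_Suc_iff)
qed

end

locale symmetric_weighted_lsq = weighted_lsq +
  assumes weight_pos: "m \<in> M \<Longrightarrow> 0 < w m"
    and nodes_symmetric: "m \<in> M \<Longrightarrow> - m \<in> M"
    and weight_even: "m \<in> M \<Longrightarrow> w (- m) = w m"
begin

lemma inner_w_reflect: "inner_w (\<lambda>m. u (- m)) (\<lambda>m. v (- m)) = inner_w u v"
  unfolding inner_w_def
  by (rule sum.reindex_bij_witness[of _ uminus uminus]) (auto simp: nodes_symmetric weight_even)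

lemma inner_w_self_eq_0_iff: "inner_w u u = 0 \<longleftrightarrow> (\<forall>m\<in>M. u m = 0)"
proof -
  have "inner_w u u = 0 \<longleftrightarrow> (\<forall>m\<in>M. w m * (u m)\<^sup>2 = 0)"
    unfolding inner_w_def using finite_nodes weight_nonneg
    by (subst sum_nonneg_eq_0_iff[symmetric]) (auto simp: power2_eq_square mult.assoc)
  moreover have "w m * (u m)\<^sup>2 = 0 \<longleftrightarrow> u m = 0" if "m \<in> M" for m
    using weight_pos[OF that] by simp
  ultimately show ?thesis by auto
qed

lemma best_fits_even_part_vanishes:
  assumes "even d" and fit: "best_fit (Suc d) y p" and fit': "best_fit d y p'"
  shows "\<forall>m\<in>M. poly (even_part (p - p')) (of_int m) = 0"
proof -
  define h where "h = p - p'"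
  define g where "g = even_part h"
  have "degree h \<le> Suc d"
    using fit fit' by (simp add: h_def best_fit_def degree_diff_le)
  then have "degree g \<le> d"
    using \<open>even d\<close> by (simp add: g_def degree_even_part)
  then have "inner_w (residual y p) (poly_fun g) = 0" and "inner_w (residual y p') (poly_fun g) = 0"
    using fit fit' best_fit_iff_orthogonal by (auto simp: best_fit_def)
  moreover have "poly_fun h = (\<lambda>m. residual y p' m - residual y p m)"
    by (simp add: h_def)
  ultimately have h_g: "inner_w (poly_fun h) (poly_fun g) = 0"
    by (simp add: inner_w_diff_left)
  have g_even: "poly g (- x) = poly g x" for x
    by (simp add: g_def poly_even_part)
  have "inner_w (\<lambda>m. poly h (- of_int m)) (poly_fun g) = inner_w (poly_fun h) (poly_fun g)"
    using inner_w_reflect[of "poly_fun h" "poly_fun g"] by (simp add: g_even)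
  then have "inner_w (\<lambda>m. (1/2) * (poly h (of_int m) + poly h (- of_int m))) (poly_fun g) = 0"
    using h_g by (simp only: inner_w_scale_left inner_w_add_left) simp
  moreover have "poly_fun g = (\<lambda>m. (1/2) * (poly h (of_int m) + poly h (- of_int m)))"
    by (simp add: g_def poly_even_part)
  ultimately have "inner_w (poly_fun g) (poly_fun g) = 0"
    by metis
  then show ?thesis by (simp add: inner_w_self_eq_0_iff g_def h_def)
qed

lemma best_fits_agree_at_0:
  assumes "even d" and "best_fit (Suc d) y p" and "best_fit d y p'"
    and unisolvent: "\<And>g :: real poly. degree g \<le> d \<Longrightarrow> \<forall>m\<in>M. poly g (of_int m) = 0 \<Longrightarrow> poly g 0 = 0"
  shows "poly p 0 = poly p' 0"
proof -
  have "degree (even_part (p - p')) \<le> d"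
    using assms(1-3) by (intro degree_even_part) (auto simp: best_fit_def degree_diff_le)
  then have "poly (even_part (p - p')) 0 = 0"
    using unisolvent best_fits_even_part_vanishes[OF assms(1-3)] by simp
  then show ?thesis by (simp add: poly_even_part)
qed

end

lemma finite_Mset: "finite (Mset lam i)"
proof (rule finite_subset)
  show "Mset lam i \<subseteq> {-\<lceil>lam\<rceil>..\<lceil>lam\<rceil>}"
    unfolding Mset_def by (auto simp: abs_less_iff) linarith+
qed simp

lemma uminus_in_Mset: "m \<in> Mset lam i \<Longrightarrow> - m \<in> Mset lam i"
  unfolding Mset_def by auto presburger

lemma wlam_uminus: "wlam phi lam (- m) = wlam phi lam m"
  by (simp add: wlam_def omega_def)

lemma wlam_pos:
  assumes "\<forall>x\<in>{0..1}. 0 < phi x" and "0 < lam" and "m \<in> Mset lam i"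
  shows "0 < wlam phi lam m"
proof -
  have "\<bar>real_of_int m / lam\<bar> < 1"
    using assms(2,3) by (simp add: Mset_def)
  then show ?thesis using assms(1) by (simp add: wlam_def omega_def)
qed

lemma symmetric_weighted_lsq_Mset:
  assumes "\<forall>x\<in>{0..1}. 0 < phi x" and "0 < lam"
  shows "symmetric_weighted_lsq (Mset lam i) (wlam phi lam)"
  using wlam_pos[OF assms] by unfold_locales
    (auto simp: finite_Mset uminus_in_Mset wlam_uminus less_imp_le)

lemma Mset_unisolvent_at_0:
  fixes g :: "real poly"
  assumes "even d" and "real (d + 1) < lam" and "degree g \<le> d"
    and vanish: "\<forall>m\<in>Mset lam i. poly g (of_int m) = 0"
  shows "poly g 0 = 0"
proof (cases "even i")
  case True
  then have "0 \<in> Mset lam i" using assms(2) by (simp add: Mset_def)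
  then show ?thesis using vanish by force
next
  case False
  obtain h where d: "d = 2 * h" using \<open>even d\<close> by blast
  define A where "A = (\<lambda>t. real_of_int (2 * t + 1)) ` {-(int h + 1)..int h}"
  have "card A = d + 2"
  proof -
    have "inj_on (\<lambda>t. real_of_int (2 * t + 1)) {-(int h + 1)..int h}" by (auto simp: inj_on_def)
    then show ?thesis by (simp add: A_def card_image d)
  qed
  moreover have "poly g x = poly 0 x" if "x \<in> A" for x
  proof -
    obtain t where t: "-(int h + 1) \<le> t" "t \<le> int h" and x: "x = of_int (2 * t + 1)"
      using \<open>x \<in> A\<close> by (auto simp: A_def)
    have "\<bar>2 * t + 1\<bar> \<le> int (d + 1)" using t d by auto
    then have "\<bar>real_of_int (2 * t + 1)\<bar> < lam"
      using assms(2) by (metis of_int_abs of_int_le_iff of_int_of_nat_eq order.strict_trans1)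
    moreover have "(2 * t + 1) mod 2 = i mod 2" using False by presburger
    ultimately have "2 * t + 1 \<in> Mset lam i" by (simp add: Mset_def)
    then have "poly g (of_int (2 * t + 1)) = 0" using vanish by blast
    then show ?thesis using x by simp
  qed
  ultimately have "g = 0"
    using \<open>degree g \<le> d\<close> by (intro poly_eqI_degree[of A]) auto
  then show ?thesis by simp
qed

theorem proposition3p7:
  fixes phi :: "real \<Rightarrow> real" and lam :: real and d :: nat
  assumes phi_range: "\<forall>x\<in>{0..1}. 0 < phi x \<and> phi x \<le> 1"
    and phi_mono: "\<forall>x y. 0 \<le> x \<longrightarrow> x \<le> y \<longrightarrow> y \<le> 1 \<longrightarrow> phi y \<le> phi x"
    and phi0: "phi 0 = 1"
    and lam_pos: "0 < lam"
    and lam_nonnat: "lam \<notin> \<nat>"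
    and d_even: "even d"
    and d_bound: "int d \<le> -2 + 2 * \<lfloor>(lam + 1) / 2\<rfloor>"
  shows "lpr_scheme d phi lam = lpr_scheme (d + 1) phi lam"
proof (intro ext)
  fix f :: "int \<Rightarrow> real" and k :: int
  define y where "y = (\<lambda>m. f (k div 2 + (m + k mod 2) div 2))"
  interpret symmetric_weighted_lsq "Mset lam (k mod 2)" "wlam phi lam"
    using symmetric_weighted_lsq_Mset phi_range lam_pos by blast
  have scheme: "lpr_scheme e phi lam f k = poly (SOME p. best_fit e y p) 0" for e
    unfolding lpr_scheme_def Let_def lpr_cost_eq_cost best_fit_def y_def ..
  have fit: "best_fit e y (SOME p. best_fit e y p)" for e
    using someI_ex[OF best_fit_exists] .
  have "real_of_int (int d) \<le> real_of_int (-2 + 2 * \<lfloor>(lam + 1) / 2\<rfloor>)"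
    using d_bound by (simp only: of_int_le_iff)
  then have "real d \<le> lam - 1"
    using of_int_floor_le[of "(lam + 1) / 2"] by simp
  moreover have "real (d + 1) \<noteq> lam"
    using lam_nonnat of_nat_in_Nats by metis
  ultimately have "real (d + 1) < lam" by simp
  then show "lpr_scheme d phi lam f k = lpr_scheme (d + 1) phi lam f k"
    unfolding scheme
    using best_fits_agree_at_0[OF d_even fit fit] Mset_unisolvent_at_0[OF d_even] by auto
qed

end
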